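(* When the greedy algorithm described in the context is run, after the deletion step at any time step $t$, the number of type-2 elements stored in QS is $O(\ell\log t)$.
   Context: A stream of elements from a totally ordered universe arrives one by one. Let $\ell=1/\varepsilon$ be an integer. The stream is partitioned into consecutive chunks of $\ell$ elements; time step $t$ is the arrival of the $t$-th chunk, and $t_0(x)$ is the time step in which $x$ arrives. The summary QS stores elements $e_1<\dots<e_s$ seen so far, each with integers $\mathrm{rmin}(e),\mathrm{rmax}(e)$; by convention $\mathrm{rmin}(e_0)=0$. An element $+\infty$, larger than all others, is inserted at the start of the stream and is always stored as $e_s$. Insert$(x)$: let $e_i$ be the smallest stored element with $e_i>x$; set $\mathrm{rmin}(x)=\mathrm{rmin}(e_{i-1})+1$, $\mathrm{rmax}(x)=\mathrm{rmax}(e_i)$, increase $\mathrm{rmin}(e_j),\mathrm{rmax}(e_j)$ by one for all $j\ge i$, and store $x$. Delete$(e_i)$: remove $e_i$, leaving all other values unchanged. Define $g_i=\mathrm{rmin}(e_i)-\mathrm{rmin}(e_{i-1})$ and $\Delta_i=\mathrm{rmax}(e_i)-\mathrm{rmin}(e_i)$. Band values: each element $x$ has an integer $\mathbf{v}(x)$: at time step $t_0(x)$, $\mathbf{v}(x)=0$; at each time step $t>t_0(x)$, if $t$ is a multiple of $2^{\mathbf{v}(x)}$ then $\mathbf{v}(x)$ is increased by one. Greedy algorithm: at each time step $t$: (i) run Insert on each element of the chunk; (ii) (deletion step) repeatedly run Delete$(e_i)$ for any arbitrarily chosen stored $e_i$ ($i<s$) with $\mathbf{v}(e_i)\le\mathbf{v}(e_{i+1})$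 and $g_i+g_{i+1}+\Delta_{i+1}\le t$, until none exists. After the deletion step at time $t$, a stored element $e_i$ ($i<s$) is called type-1 if $\mathbf{v}(e_i)>\mathbf{v}(e_{i+1})$, and type-2 if it is not type-1 (in which case $g_i+g_{i+1}+\Delta_{i+1}>t$). *)

theory Defs
  imports Complex_Main
begin

text \<open>Entries of the summary QS. key = None encodes the sentinel +infinity.
  arr is the time step t0 in which the element arrived (0 for +infinity,
  which is inserted at the start of the stream).\<close>
record 'a entry =
  key :: "'a option"
  arr :: nat
  rmn :: nat
  rmx :: nat

fun key_less :: "'a::linorder option \<Rightarrow> 'a option \<Rightarrow> bool" where
  "key_less (Some a) (Some b) = (a < b)"
| "key_less (Some a) None = True"
| "key_less None _ = False"

fun band :: "nat \<Rightarrow> nat \<Rightarrow> nat" where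
  "band t0 0 = 0"
| "band t0 (Suc t) =
     (if Suc t \<le> t0 then 0
      else (if 2 ^ band t0 t dvd Suc t then Suc (band t0 t) else band t0 t))"

definition bump :: "'a entry \<Rightarrow> 'a entry" where
  "bump e = e\<lparr>rmn := Suc (rmn e), rmx := Suc (rmx e)\<rparr>"

text \<open>Insert x (arriving at time step t0). The third argument is rmin of the
  predecessor of the current position (rmin(e_0) = 0 initially).\<close>
fun ins :: "'a::linorder \<Rightarrow> nat \<Rightarrow> nat \<Rightarrow> 'a entry list \<Rightarrow> 'a entry list" where
  "ins x t0 p [] = []"
| "ins x t0 p (e # es) =
     (if key_less (Some x) (key e)
      then \<lparr>key = Some x, arr = t0, rmn = Suc p, rmx = rmx e\<rparr> # map bump (e # es)
      else e # ins x t0 (rmn e) es)"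

definition Insert :: "'a::linorder \<Rightarrow> nat \<Rightarrow> 'a entry list \<Rightarrow> 'a entry list" where
  "Insert x t0 qs = ins x t0 0 qs"

text \<open>Initial summary: only +infinity stored (rmin = rmax = 1, as given by Insert
  applied to the empty summary).\<close>
definition init_qs :: "'a entry list" where
  "init_qs = [\<lparr>key = None, arr = 0, rmn = 1, rmx = 1\<rparr>]"

text \<open>0-based indices: list position j corresponds to e_(j+1).\<close>
definition gap :: "'a entry list \<Rightarrow> nat \<Rightarrow> int" where
  "gap qs j = int (rmn (qs ! j)) - (if j = 0 then 0 else int (rmn (qs ! (j - 1))))"

definition delta :: "'a entry list \<Rightarrow> nat \<Rightarrow> int" where
  "delta qs j = int (rmx (qs ! j)) - int (rmn (qs ! j))"

definition vband :: "nat \<Rightarrow> 'a entry list \<Rightarrow> nat \<Rightarrow> nat" where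
  "vband t qs j = band (arr (qs ! j)) t"

definition deletable :: "nat \<Rightarrow> 'a entry list \<Rightarrow> nat \<Rightarrow> bool" where
  "deletable t qs j \<longleftrightarrow> Suc j < length qs \<and> vband t qs j \<le> vband t qs (Suc j)
     \<and> gap qs j + gap qs (Suc j) + delta qs (Suc j) \<le> int t"

definition Delete :: "nat \<Rightarrow> 'a entry list \<Rightarrow> 'a entry list" where
  "Delete j qs = take j qs @ drop (Suc j) qs"

definition del_step :: "nat \<Rightarrow> 'a entry list \<Rightarrow> 'a entry list \<Rightarrow> bool" where
  "del_step t qs qs' \<longleftrightarrow> (\<exists>j. deletable t qs j \<and> qs' = Delete j qs)"

definition insert_chunk :: "nat \<Rightarrow> (nat \<Rightarrow> 'a::linorder) \<Rightarrow> nat \<Rightarrow> 'a entry list \<Rightarrow> 'a entry list" where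
  "insert_chunk l \<sigma> t qs = foldl (\<lambda>q k. Insert (\<sigma> ((t - 1) * l + k)) t q) qs [0..<l]"

text \<open>reach l sigma t qs: qs is a possible content of QS after the deletion step at
  time step t (for some choice of deletions); t = 0 is the initial state.\<close>
inductive reach :: "nat \<Rightarrow> (nat \<Rightarrow> 'a::linorder) \<Rightarrow> nat \<Rightarrow> 'a entry list \<Rightarrow> bool"
  for l \<sigma> where
  start: "reach l \<sigma> 0 init_qs"
| step: "reach l \<sigma> t qs \<Longrightarrow>
         (del_step (Suc t))\<^sup>*\<^sup>* (insert_chunk l \<sigma> (Suc t) qs) qs' \<Longrightarrow>
         (\<forall>j. \<not> deletable (Suc t) qs' j) \<Longrightarrow>
         reach l \<sigma> (Suc t) qs'"

definition type1 :: "nat \<Rightarrow> 'a entry list \<Rightarrow> nat \<Rightarrow> bool" where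
  "type1 t qs j \<longleftrightarrow> Suc j < length qs \<and> vband t qs j > vband t qs (Suc j)"

definition type2 :: "nat \<Rightarrow> 'a entry list \<Rightarrow> nat \<Rightarrow> bool" where
  "type2 t qs j \<longleftrightarrow> Suc j < length qs \<and> \<not> type1 t qs j"

definition num_type2 :: "nat \<Rightarrow> 'a entry list \<Rightarrow> nat" where
  "num_type2 t qs = card {j. type2 t qs j}"

end

theory Submission
  imports Defs
begin

text \<open>Charge the gap \<open>g\<^sub>i\<close> of every stored element to the band of that element. Each
  time step adds \<open>l\<close> units of gap in band 0, bands only grow with time, and deleting \<open>e\<^sub>i\<close>
  moves \<open>g\<^sub>i\<close> onto \<open>e\<^sub>i\<^sub>+\<^sub>1\<close>, whose band is not smaller. Hence the elements in bands \<open>\<le> w\<close>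
  carry gap at most \<open>l\<close> times the number of time steps \<open>a \<le> t\<close> with band \<open>\<le> w\<close>, which is
  at most \<open>l * 2 ^ (w + 1)\<close>. Conversely, an element in band \<open>w\<close> arrived at least
  \<open>2 ^ (w - 1)\<close> steps ago, so a type-2 element whose successor is in band \<open>w\<close> is not deletable
  only because the two gaps together exceed \<open>t - \<Delta> \<ge> 2 ^ (w - 1)\<close>. So each of the
  \<open>O(log t)\<close> bands contains \<open>O(l)\<close> type-2 elements.\<close>

section \<open>Band values\<close>

definition band_step :: "nat \<Rightarrow> nat \<Rightarrow> nat" where
  "band_step t v = (if 2 ^ v dvd Suc t then Suc v else v)"

lemma band_eq_0: "t \<le> a \<Longrightarrow> band a t = 0"
  by (induction t) auto

lemma band_Suc: "a \<le> t \<Longrightarrow> band a (Suc t) = band_step t (band a t)"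
  by (simp add: band_step_def)

lemma band_step_mono: "mono (band_step t)"
proof (rule monoI)
  fix u v :: nat
  assume "u \<le> v"
  then consider "u = v" | "Suc u \<le> v" by linarith
  then show "band_step t u \<le> band_step t v"
    by cases (auto simp: band_step_def)
qed

text \<open>With \<open>v = band a t\<close>: rounding \<open>t\<close> down to a multiple of \<open>2 ^ v\<close> stays below
  \<open>a + 2 ^ v\<close>, otherwise the band would have grown again; and \<open>v\<close> was reached at a
  multiple of \<open>2 ^ (v - 1)\<close> that is at least \<open>a + 2 ^ (v - 1)\<close>.\<close>

lemma band_round_down_less: "a \<le> t \<Longrightarrow> t - t mod 2 ^ band a t < a + 2 ^ band a t"
proof (induction t)
  case 0
  then show ?case by simp
next
  case (Suc t)
  show ?case
  proof (cases "a = Suc t")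
    case True
    then show ?thesis by (simp add: band_eq_0)
  next
    case False
    then have "a \<le> t" using Suc.prems by simp
    define m :: nat where "m = 2 ^ band a t"
    have IH: "t - t mod m < a + m"
      using Suc.IH[OF \<open>a \<le> t\<close>] by (simp add: m_def)
    show ?thesis
    proof (cases "m dvd Suc t")
      case True
      then have "band a (Suc t) = Suc (band a t)"
        using \<open>a \<le> t\<close> by (simp add: band_Suc band_step_def m_def)
      moreover have "Suc (t mod m) = m"
        using True by (simp add: mod_Suc dvd_eq_mod_eq_0 split: if_splits)
      ultimately show ?thesis using IH by (simp add: m_def)
    next
      case False
      then have "band a (Suc t) = band a t"
        using \<open>a \<le> t\<close> by (simp add: band_Suc band_step_def m_def)
      moreover have "Suc t mod m = Suc (t mod m)"
        using False by (auto simp: mod_Suc dvd_eq_mod_eq_0 split: if_splits)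
      ultimately show ?thesis using IH by (simp add: m_def)
    qed
  qed
qed

lemma band_round_down_ge:
  "a < t \<Longrightarrow> 0 < band a t \<and> a + 2 ^ (band a t - 1) \<le> t - t mod 2 ^ (band a t - 1)"
proof (induction t)
  case 0
  then show ?case by simp
next
  case (Suc t)
  show ?case
  proof (cases "a = t")
    case True
    then show ?thesis by (simp add: band_eq_0)
  next
    case False
    then have "a < t" using Suc.prems by simp
    define v where "v = band a t"
    define m :: nat where "m = 2 ^ (v - 1)"
    have "0 < v" and IH: "a + m \<le> t - t mod m"
      using Suc.IH[OF \<open>a < t\<close>] by (simp_all add: v_def m_def)
    have round: "t - t mod m = m * (t div m)" by (simp add: minus_mod_eq_mult_div)
    show ?thesis
    proof (cases "2 ^ v dvd Suc t")
      case True
      then have "band a (Suc t) = Suc v"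
        using \<open>a < t\<close> by (simp add: band_Suc band_step_def v_def)
      have "2 ^ v = 2 * m" using \<open>0 < v\<close> by (simp add: m_def power_Suc[symmetric])
      obtain q where "Suc t = 2 ^ v * q" using True by (rule dvdE)
      then have q: "Suc t = m * (2 * q)" using \<open>2 ^ v = 2 * m\<close> by simp
      have "m * (t div m) \<le> t" using round[symmetric] by simp
      then have "m * (t div m) < m * (2 * q)" using q by linarith
      then have "Suc (t div m) \<le> 2 * q" by simp
      then have "m * Suc (t div m) \<le> m * (2 * q)" by (rule mult_le_mono2)
      then have "a + 2 ^ v \<le> Suc t" using IH round q \<open>2 ^ v = 2 * m\<close> by simp
      moreover have "Suc t mod 2 ^ v = 0" using True by simp
      ultimately show ?thesis using \<open>band a (Suc t) = Suc v\<close> by simp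
    next
      case False
      then have "band a (Suc t) = v"
        using \<open>a < t\<close> by (simp add: band_Suc band_step_def v_def)
      moreover have "t - t mod m \<le> Suc t - Suc t mod m"
        by (simp add: minus_mod_eq_mult_div div_le_mono)
      ultimately show ?thesis using IH \<open>0 < v\<close> by (simp add: m_def)
    qed
  qed
qed

lemma two_pow_band_le: "a < t \<Longrightarrow> 2 ^ band a t \<le> 2 * (t - a)"
proof -
  assume "a < t"
  from band_round_down_ge[OF this]
  have "0 < band a t" and "2 ^ (band a t - 1) \<le> t - a" by auto
  then show ?thesis by (cases "band a t") simp_all
qed

lemma less_two_pow_Suc_band: "a \<le> t \<Longrightarrow> t - a < 2 ^ Suc (band a t)"
proof -
  assume "a \<le> t"
  define m :: nat where "m = 2 ^ band a t"
  have "t - t mod m < a + m" unfolding m_def using \<open>a \<le> t\<close> by (rule band_round_down_less)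
  moreover have "t mod m < m" "t mod m \<le> t" by (simp_all add: m_def)
  ultimately have "t - a < 2 * m" by linarith
  then show ?thesis by (simp add: m_def)
qed

lemma band_le_log: "a \<le> t \<Longrightarrow> band a t \<le> nat \<lfloor>log 2 (real t)\<rfloor> + 1"
proof (cases "a = t")
  case True
  then show ?thesis by (simp add: band_eq_0)
next
  case False
  assume "a \<le> t"
  with False have "2 ^ band a t \<le> 2 * t" using two_pow_band_le[of a t] by simp
  then have "2 ^ (band a t - 1) \<le> t" by (cases "band a t") simp_all
  then have "real (band a t - 1) \<le> log 2 (real t)" by (rule le_log2_of_power)
  then show ?thesis by linarith
qed

lemma card_band_le: "card {a. a \<le> t \<and> band a t \<le> w} \<le> 2 ^ Suc w"
proof -
  have "{a. a \<le> t \<and> band a t \<le> w} \<subseteq> {Suc t - 2 ^ Suc w .. t}"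
  proof safe
    fix a assume "a \<le> t" "band a t \<le> w"
    have "(2::nat) ^ Suc (band a t) \<le> 2 ^ Suc w"
      using \<open>band a t \<le> w\<close> by (intro power_increasing) auto
    then have "t - a < 2 ^ Suc w"
      using less_two_pow_Suc_band[OF \<open>a \<le> t\<close>] by linarith
    then show "a \<in> {Suc t - 2 ^ Suc w .. t}" using \<open>a \<le> t\<close> by simp
  qed
  then have "card {a. a \<le> t \<and> band a t \<le> w} \<le> card {Suc t - 2 ^ Suc w .. t}"
    by (intro card_mono) auto
  then show ?thesis by simp
qed

section \<open>Gap mass of the bands\<close>

text \<open>Pairing each entry with the rmin of its predecessor makes gaps local: a deletion
  changes a single pair.\<close>
fun with_prev_rmin :: "nat \<Rightarrow> 'a entry list \<Rightarrow> (nat \<times> 'a entry) list" where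
  "with_prev_rmin p [] = []"
| "with_prev_rmin p (e # es) = (p, e) # with_prev_rmin (rmn e) es"

lemma length_with_prev_rmin [simp]: "length (with_prev_rmin p qs) = length qs"
  by (induction qs arbitrary: p) auto

lemma nth_with_prev_rmin:
  "j < length qs \<Longrightarrow> with_prev_rmin p qs ! j = (if j = 0 then p else rmn (qs ! (j - 1)), qs ! j)"
  by (induction qs arbitrary: p j) (auto simp: nth_Cons split: nat.splits)

lemma with_prev_rmin_map_bump:
  "with_prev_rmin (Suc p) (map bump es) = map (\<lambda>(q, e). (Suc q, bump e)) (with_prev_rmin p es)"
  by (induction es arbitrary: p) (auto simp: bump_def)

lemma with_prev_rmin_append:
  "with_prev_rmin p (xs @ ys) = with_prev_rmin p xs @ with_prev_rmin (last (p # map rmn xs)) ys"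
  by (induction xs arbitrary: p) auto

lemma gap_eq_with_prev_rmin:
  "j < length qs \<Longrightarrow> gap qs j = int (rmn (snd (with_prev_rmin 0 qs ! j))) - int (fst (with_prev_rmin 0 qs ! j))"
  by (simp add: gap_def nth_with_prev_rmin)

fun valid_entry :: "nat \<Rightarrow> nat \<times> 'a entry \<Rightarrow> bool" where
  "valid_entry T (p, e) \<longleftrightarrow> p \<le> rmn e \<and> rmx e \<le> p + T \<and> rmx e \<le> rmn e + arr e \<and> arr e \<le> T"

definition valid_summary :: "nat \<Rightarrow> 'a entry list \<Rightarrow> bool" where
  "valid_summary T qs \<longleftrightarrow> (\<forall>z \<in> set (with_prev_rmin 0 qs). valid_entry T z)"

fun band_gap :: "nat \<Rightarrow> nat set \<Rightarrow> nat \<times> 'a entry \<Rightarrow> int" where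
  "band_gap T D (p, e) = (if band (arr e) T \<in> D then int (rmn e) - int p else 0)"

definition band_mass :: "nat \<Rightarrow> nat set \<Rightarrow> 'a entry list \<Rightarrow> int" where
  "band_mass T D qs = sum_list (map (band_gap T D) (with_prev_rmin 0 qs))"

definition down_closed :: "nat set \<Rightarrow> bool" where
  "down_closed D \<longleftrightarrow> (\<forall>u \<in> D. \<forall>v \<le> u. v \<in> D)"

lemma valid_entry_mono: "valid_entry T z \<Longrightarrow> T \<le> T' \<Longrightarrow> valid_entry T' z"
  by (cases z) auto

lemma band_mass_eq_sum_gap:
  "band_mass T D qs = (\<Sum>j | j < length qs \<and> band (arr (qs ! j)) T \<in> D. gap qs j)"
proof -
  have "band_mass T D qs = (\<Sum>j<length qs. band_gap T D (with_prev_rmin 0 qs ! j))"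
    by (simp add: band_mass_def sum_list_sum_nth atLeast0LessThan)
  also have "\<dots> = (\<Sum>j<length qs. if band (arr (qs ! j)) T \<in> D then gap qs j else 0)"
    by (intro sum.cong) (auto simp: gap_def nth_with_prev_rmin)
  also have "\<dots> = (\<Sum>j | j < length qs \<and> band (arr (qs ! j)) T \<in> D. gap qs j)"
    by (simp add: sum.If_cases Collect_conj_eq lessThan_def Int_commute)
  finally show ?thesis .
qed

lemma sum_band_gap_map_bump:
  "sum_list (map (band_gap T D) (with_prev_rmin (Suc p) (map bump es)))
     = sum_list (map (band_gap T D) (with_prev_rmin p es))"
  by (induction es arbitrary: p) (simp_all add: bump_def)

lemma ins_valid:
  "\<forall>z \<in> set (with_prev_rmin p qs). valid_entry T z \<Longrightarrow>
   \<forall>z \<in> set (with_prev_rmin p (ins x T p qs)). valid_entry T z"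
proof (induction qs arbitrary: p)
  case (Cons e es)
  then show ?case
    by (cases e) (auto simp: with_prev_rmin_map_bump bump_def)
qed simp

lemma sum_band_gap_ins_le:
  "sum_list (map (band_gap T D) (with_prev_rmin p (ins x T p qs)))
     \<le> sum_list (map (band_gap T D) (with_prev_rmin p qs)) + 1"
proof (induction qs arbitrary: p)
  case (Cons e es)
  then show ?case by (auto simp: sum_band_gap_map_bump bump_def)
qed simp

lemma foldl_Insert_valid:
  "valid_summary T qs \<Longrightarrow> valid_summary T (foldl (\<lambda>q k. Insert (h k) T q) qs ks)"
  by (induction ks arbitrary: qs) (auto simp: Insert_def valid_summary_def dest: ins_valid)

lemma foldl_Insert_band_mass_le:
  "band_mass T D (foldl (\<lambda>q k. Insert (h k) T q) qs ks) \<le> band_mass T D qs + int (length ks)"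
proof (induction ks arbitrary: qs)
  case (Cons k ks)
  have "band_mass T D (Insert (h k) T qs) \<le> band_mass T D qs + 1"
    unfolding band_mass_def Insert_def by (rule sum_band_gap_ins_le)
  then show ?case using Cons[of "Insert (h k) T qs"] by simp
qed simp

lemma with_prev_rmin_Delete:
  assumes "Suc j < length qs"
  obtains xs p a b ys where "with_prev_rmin 0 qs = xs @ (p, a) # (rmn a, b) # ys"
    and "with_prev_rmin 0 (Delete j qs) = xs @ (p, b) # ys" and "length xs = j"
proof -
  define xs where "xs = take j qs"
  define ys where "ys = drop (Suc (Suc j)) qs"
  define a where "a = qs ! j"
  define b where "b = qs ! Suc j"
  define p where "p = last (0 # map rmn xs)"
  have qs: "qs = xs @ a # b # ys"
    using assms by (simp add: xs_def ys_def a_def b_def id_take_nth_drop Cons_nth_drop_Suc)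
  have "Delete j qs = xs @ b # ys"
    using assms by (simp add: Delete_def xs_def ys_def b_def Cons_nth_drop_Suc)
  moreover have "length xs = j" using assms by (simp add: xs_def)
  ultimately show ?thesis
    using that[of "with_prev_rmin 0 xs" p a b "with_prev_rmin (rmn b) ys"]
    by (simp add: qs with_prev_rmin_append p_def)
qed

lemma deletable_merge:
  assumes "deletable T qs j"
  obtains xs p a b ys where "with_prev_rmin 0 qs = xs @ (p, a) # (rmn a, b) # ys"
    and "with_prev_rmin 0 (Delete j qs) = xs @ (p, b) # ys"
    and "band (arr a) T \<le> band (arr b) T" and "rmx b \<le> p + T"
proof -
  have "Suc j < length qs" using assms by (simp add: deletable_def)
  then obtain xs p a b ys where P: "with_prev_rmin 0 qs = xs @ (p, a) # (rmn a, b) # ys"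
    and P': "with_prev_rmin 0 (Delete j qs) = xs @ (p, b) # ys" and "length xs = j"
    by (rule with_prev_rmin_Delete)
  have "with_prev_rmin 0 qs ! j = (p, a)" "with_prev_rmin 0 qs ! Suc j = (rmn a, b)"
    using P \<open>length xs = j\<close> by (simp_all add: nth_append)
  then have "gap qs j + gap qs (Suc j) + delta qs (Suc j) = int (rmx b) - int p"
    and "vband T qs j = band (arr a) T" and "vband T qs (Suc j) = band (arr b) T"
    using \<open>Suc j < length qs\<close>
    by (simp_all add: gap_eq_with_prev_rmin delta_def vband_def nth_with_prev_rmin)
  then show ?thesis
    using that[OF P P'] assms by (simp add: deletable_def)
qed

lemma Delete_valid:
  assumes "deletable T qs j" and "valid_summary T qs"
  shows "valid_summary T (Delete j qs)"
  using assms(1)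
proof (rule deletable_merge)
  fix xs p a b ys
  assume "with_prev_rmin 0 qs = xs @ (p, a) # (rmn a, b) # ys"
    and "with_prev_rmin 0 (Delete j qs) = xs @ (p, b) # ys" and "rmx b \<le> p + T"
  then show ?thesis using assms(2) by (auto simp: valid_summary_def)
qed

lemma Delete_band_mass_le:
  assumes "deletable T qs j" and "valid_summary T qs" and "down_closed D"
  shows "band_mass T D (Delete j qs) \<le> band_mass T D qs"
  using assms(1)
proof (rule deletable_merge)
  fix xs p a b ys
  assume P: "with_prev_rmin 0 qs = xs @ (p, a) # (rmn a, b) # ys"
    and P': "with_prev_rmin 0 (Delete j qs) = xs @ (p, b) # ys"
    and "band (arr a) T \<le> band (arr b) T"
  then have "band_gap T D (p, b) \<le> band_gap T D (p, a) + band_gap T D (rmn a, b)"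
    using assms(2,3) by (auto simp: down_closed_def valid_summary_def)
  then show ?thesis by (simp add: band_mass_def P P')
qed

lemma del_steps_valid:
  "(del_step T)\<^sup>*\<^sup>* qs qs' \<Longrightarrow> valid_summary T qs \<Longrightarrow> valid_summary T qs'"
  by (induction rule: rtranclp_induct) (auto simp: del_step_def intro: Delete_valid)

lemma del_steps_band_mass_le:
  assumes "(del_step T)\<^sup>*\<^sup>* qs qs'" and "valid_summary T qs" and "down_closed D"
  shows "band_mass T D qs' \<le> band_mass T D qs"
  using assms(1)
proof (induction rule: rtranclp_induct)
  case (step qs1 qs2)
  then obtain j where "deletable T qs1 j" "qs2 = Delete j qs1" by (auto simp: del_step_def)
  moreover have "valid_summary T qs1" using del_steps_valid[OF step.hyps(1) assms(2)] .
  ultimately show ?case using Delete_band_mass_le[OF _ _ assms(3)] step.IH by fastforce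
qed simp

lemma down_closed_vimage_band_step: "down_closed D \<Longrightarrow> down_closed (band_step t -` D)"
  using band_step_mono by (auto simp: down_closed_def mono_def)

lemma band_mass_Suc:
  assumes "\<And>j. j < length qs \<Longrightarrow> arr (qs ! j) \<le> t"
  shows "band_mass (Suc t) D qs = band_mass t (band_step t -` D) qs"
  unfolding band_mass_eq_sum_gap using assms
  by (intro sum.cong) (auto simp: band_Suc simp del: band.simps)

lemma card_arrivals_Suc:
  assumes "0 \<in> D"
  shows "card {a. a \<le> Suc t \<and> band a (Suc t) \<in> D} = Suc (card {a. a \<le> t \<and> band a t \<in> band_step t -` D})"
proof -
  have "{a. a \<le> Suc t \<and> band a (Suc t) \<in> D} = insert (Suc t) {a. a \<le> t \<and> band a t \<in> band_step t -` D}"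
    using assms by (auto simp: band_Suc band_eq_0 simp del: band.simps)
  then show ?thesis by simp
qed

lemma reach_valid:
  "reach l \<sigma> t qs \<Longrightarrow> valid_summary (Suc t) qs \<and> (\<forall>j < length qs. arr (qs ! j) \<le> t)"
proof (induction rule: reach.induct)
  case start
  show ?case by (simp add: init_qs_def valid_summary_def)
next
  case (step t qs qs')
  have "valid_summary (Suc t) (insert_chunk l \<sigma> (Suc t) qs)"
    unfolding insert_chunk_def using step.IH by (intro foldl_Insert_valid) simp
  then have "valid_summary (Suc t) qs'" using step.hyps(2) by (rule del_steps_valid[rotated])
  then show ?case
    using nth_mem[of _ "with_prev_rmin 0 qs'"]
    by (fastforce simp: valid_summary_def nth_with_prev_rmin intro: valid_entry_mono)
qed

text \<open>The sentinel \<open>+\<infinity>\<close> carries gap 1 and is charged to time step 0; this needs \<open>1 \<le> l\<close>.\<close>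
lemma reach_band_mass_le:
  "reach l \<sigma> t qs \<Longrightarrow> 1 \<le> l \<Longrightarrow> down_closed D \<Longrightarrow>
   band_mass t D qs \<le> int l * int (card {a. a \<le> t \<and> band a t \<in> D})"
proof (induction arbitrary: D rule: reach.induct)
  case start
  then show ?case
    by (cases "0 \<in> D") (auto simp: band_mass_def init_qs_def)
next
  case (step t qs qs')
  show ?case
  proof (cases "D = {}")
    case False
    then have "0 \<in> D" using \<open>down_closed D\<close> by (auto simp: down_closed_def)
    have "valid_summary (Suc t) qs" "\<forall>j < length qs. arr (qs ! j) \<le> t"
      using reach_valid[OF step.hyps(1)] by simp_all
    then have "valid_summary (Suc t) (insert_chunk l \<sigma> (Suc t) qs)"
      unfolding insert_chunk_def by (intro foldl_Insert_valid)
    then have "band_mass (Suc t) D qs' \<le> band_mass (Suc t) D (insert_chunk l \<sigma> (Suc t) qs)"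
      using step.hyps(2) \<open>down_closed D\<close> by (intro del_steps_band_mass_le)
    also have "\<dots> \<le> band_mass (Suc t) D qs + int l"
      unfolding insert_chunk_def
      using foldl_Insert_band_mass_le[of "Suc t" D "\<lambda>k. \<sigma> (t * l + k)" qs "[0..<l]"] by simp
    also have "band_mass (Suc t) D qs = band_mass t (band_step t -` D) qs"
      using \<open>\<forall>j < length qs. arr (qs ! j) \<le> t\<close> by (intro band_mass_Suc) simp
    also have "\<dots> \<le> int l * int (card {a. a \<le> t \<and> band a t \<in> band_step t -` D})"
      using step.prems by (intro step.IH down_closed_vimage_band_step)
    finally show ?thesis
      using card_arrivals_Suc[OF \<open>0 \<in> D\<close>] by (simp add: algebra_simps)
  qed (simp add: band_mass_eq_sum_gap)
qed

section \<open>Counting type-2 elements\<close>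

lemma valid_summary_nth:
  assumes "valid_summary T qs" and "j < length qs"
  shows "0 \<le> gap qs j" and "delta qs j \<le> int (arr (qs ! j))"
proof -
  have "valid_entry T (with_prev_rmin 0 qs ! j)"
    using assms nth_mem[of j "with_prev_rmin 0 qs"] by (simp add: valid_summary_def)
  then show "0 \<le> gap qs j" and "delta qs j \<le> int (arr (qs ! j))"
    using assms(2) by (auto simp: gap_eq_with_prev_rmin delta_def nth_with_prev_rmin)
qed

lemma reach_not_deletable: "reach l \<sigma> t qs \<Longrightarrow> 1 \<le> t \<Longrightarrow> \<not> deletable t qs j"
  by (cases rule: reach.cases) auto

lemma reach_type2_gap:
  assumes "reach l \<sigma> t qs" and "1 \<le> t" and "type2 t qs j"
  shows "int t - int (arr (qs ! Suc j)) < gap qs j + gap qs (Suc j)"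
proof -
  have "\<not> gap qs j + gap qs (Suc j) + delta qs (Suc j) \<le> int t"
    using reach_not_deletable[OF assms(1,2)] assms(3) by (auto simp: deletable_def type2_def type1_def)
  moreover have "delta qs (Suc j) \<le> int (arr (qs ! Suc j))"
    using reach_valid[OF assms(1)] assms(3) by (intro valid_summary_nth) (auto simp: type2_def)
  ultimately show ?thesis by linarith
qed

lemma card_type2_band_le:
  assumes gap_nonneg: "\<And>j. j < length qs \<Longrightarrow> 0 \<le> gap qs j"
    and arr_le: "\<And>j. j < length qs \<Longrightarrow> arr (qs ! j) \<le> t"
    and type2_gap: "\<And>j. type2 t qs j \<Longrightarrow> int t - int (arr (qs ! Suc j)) < gap qs j + gap qs (Suc j)"
    and mass_le: "(\<Sum>j | j < length qs \<and> vband t qs j \<le> w. gap qs j) \<le> int l * 2 ^ Suc w"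
  shows "card {j. type2 t qs j \<and> vband t qs (Suc j) = w} \<le> 8 * l"
proof -
  define J where "J = {j. type2 t qs j \<and> vband t qs (Suc j) = w}"
  define S where "S = {j. j < length qs \<and> vband t qs j \<le> w}"
  have "finite S" by (simp add: S_def)
  have "J \<subseteq> S" "Suc ` J \<subseteq> S" by (auto simp: J_def S_def type2_def type1_def)
  then have "finite J" using \<open>finite S\<close> finite_subset by blast
  have wide: "2 ^ w \<le> 2 * (gap qs j + gap qs (Suc j))" if "j \<in> J" for j
  proof -
    define a where "a = arr (qs ! Suc j)"
    have "type2 t qs j" and "band a t = w"
      using that by (simp_all add: J_def a_def vband_def)
    then have "a \<le> t" and gaps: "int t - int a < gap qs j + gap qs (Suc j)"
      using arr_le type2_gap by (auto simp: a_def type2_def)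
    show ?thesis
    proof (cases "a < t")
      case True
      then have "2 ^ w \<le> 2 * (t - a)" using two_pow_band_le \<open>band a t = w\<close> by blast
      then have "int (2 ^ w) \<le> int (2 * (t - a))" by (simp only: of_nat_le_iff)
      then have "(2::int) ^ w \<le> 2 * (int t - int a)" using True by (simp add: of_nat_diff)
      also have "\<dots> \<le> 2 * (gap qs j + gap qs (Suc j))" using gaps by simp
      finally show ?thesis .
    next
      case False
      then show ?thesis using \<open>a \<le> t\<close> \<open>band a t = w\<close> gaps by (simp add: band_eq_0)
    qed
  qed
  have "(\<Sum>j\<in>J. gap qs j) \<le> (\<Sum>j\<in>S. gap qs j)" "(\<Sum>j\<in>Suc ` J. gap qs j) \<le> (\<Sum>j\<in>S. gap qs j)"
    using \<open>finite S\<close> \<open>J \<subseteq> S\<close> \<open>Suc ` J \<subseteq> S\<close> gap_nonneg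
    by (auto intro!: sum_mono2 simp: S_def)
  then have J_mass: "(\<Sum>j\<in>J. gap qs j + gap qs (Suc j)) \<le> 2 * (int l * 2 ^ Suc w)"
    using mass_le by (simp add: sum.distrib sum.reindex S_def)
  have "int (card J) * 2 ^ w \<le> 2 * (\<Sum>j\<in>J. gap qs j + gap qs (Suc j))"
    using sum_mono[OF wide] by (simp add: sum_distrib_left)
  also have "\<dots> \<le> 4 * (int l * 2 ^ Suc w)" using J_mass by simp
  also have "\<dots> = int (8 * l) * 2 ^ w" by simp
  finally show ?thesis by (simp add: J_def)
qed

lemma reach_num_type2_le:
  assumes "reach l \<sigma> t qs" and "1 \<le> l" and "1 \<le> t"
  shows "num_type2 t qs \<le> 8 * l * (nat \<lfloor>log 2 (real t)\<rfloor> + 2)"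
proof -
  define W where "W = nat \<lfloor>log 2 (real t)\<rfloor> + 1"
  have valid: "valid_summary (Suc t) qs" and arr_le: "\<forall>j < length qs. arr (qs ! j) \<le> t"
    using reach_valid[OF assms(1)] by simp_all
  have mass_le: "(\<Sum>j | j < length qs \<and> vband t qs j \<le> w. gap qs j) \<le> int l * 2 ^ Suc w" for w
  proof -
    have "(\<Sum>j | j < length qs \<and> vband t qs j \<le> w. gap qs j) = band_mass t {..w} qs"
      by (simp add: band_mass_eq_sum_gap vband_def)
    also have "\<dots> \<le> int l * int (card {a. a \<le> t \<and> band a t \<le> w})"
      using reach_band_mass_le[OF assms(1,2), of "{..w}"] by (simp add: down_closed_def)
    also have "\<dots> \<le> int l * 2 ^ Suc w"
    proof -
      have "int (card {a. a \<le> t \<and> band a t \<le> w}) \<le> int (2 ^ Suc w)"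
        unfolding of_nat_le_iff by (rule card_band_le)
      then show ?thesis by (intro mult_left_mono) simp_all
    qed
    finally show ?thesis .
  qed
  have "{j. type2 t qs j} = (\<Union>w\<le>W. {j. type2 t qs j \<and> vband t qs (Suc j) = w})"
    using arr_le band_le_log by (fastforce simp: W_def type2_def vband_def)
  then have "num_type2 t qs \<le> (\<Sum>w\<le>W. card {j. type2 t qs j \<and> vband t qs (Suc j) = w})"
    unfolding num_type2_def by (metis card_UN_le finite_atMost)
  also have "\<dots> \<le> (\<Sum>w\<le>W. 8 * l)"
    using valid_summary_nth(1)[OF valid] arr_le reach_type2_gap[OF assms(1,3)] mass_le
    by (intro sum_mono card_type2_band_le) auto
  finally show ?thesis by (simp add: W_def algebra_simps)
qed

theorem mainTheorem5:
  "\<exists>C::real. \<forall>(l::nat) (\<sigma>::nat \<Rightarrow> 'a::linorder) (t::nat) qs.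
     l \<ge> 1 \<longrightarrow> inj \<sigma> \<longrightarrow> t \<ge> 1 \<longrightarrow> reach l \<sigma> t qs \<longrightarrow>
     real (num_type2 t qs) \<le> C * real l * (1 + log 2 (real t))"
proof (intro exI[of _ 16] allI impI)
  fix l :: nat and \<sigma> :: "nat \<Rightarrow> 'a::linorder" and t :: nat and qs
  assume "l \<ge> 1" and "inj \<sigma>" and "t \<ge> 1" and "reach l \<sigma> t qs"
    \<comment> \<open>the bound does not need distinct stream elements\<close>
  have "real (num_type2 t qs) \<le> real (8 * l * (nat \<lfloor>log 2 (real t)\<rfloor> + 2))"
    unfolding of_nat_le_iff using \<open>reach l \<sigma> t qs\<close> \<open>l \<ge> 1\<close> \<open>t \<ge> 1\<close> by (rule reach_num_type2_le)
  also have "\<dots> = 8 * real l * (real (nat \<lfloor>log 2 (real t)\<rfloor>) + 2)" by (simp add: algebra_simps)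
  also have "\<dots> \<le> 8 * real l * (log 2 (real t) + 2)"
    using \<open>t \<ge> 1\<close> by (intro mult_left_mono) auto
  also have "\<dots> \<le> 16 * real l * (1 + log 2 (real t))"
    using \<open>t \<ge> 1\<close> by (simp add: algebra_simps)
  finally show "real (num_type2 t qs) \<le> 16 * real l * (1 + log 2 (real t))" .
qed

end
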